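(* Let $H:=\{(s,t)\in\mathbb{R}^2: t\ge 0\}$, equipped with the metric induced by the supremum norm $\|(a,b)\|_\infty=\max\{|a|,|b|\}$ on $\mathbb{R}^2$. Then $H$ admits two distinct reversible conical bicombings.
   Context: A bicombing on a metric space $(X,d)$ is a map $\sigma\colon X\times X\times[0,1]\to X$ such that each $\sigma_{xy}:=\sigma(x,y,\cdot)$ is a geodesic from $x$ to $y$ ($\sigma_{xy}(0)=x$, $\sigma_{xy}(1)=y$, $d(\sigma_{xy}(s),\sigma_{xy}(t))=|s-t|d(x,y)$). It is conical if $d(\sigma_{xy}(t),\sigma_{x'y'}(t))\le(1-t)d(x,x')+t\,d(y,y')$ for all $x,y,x',y'$, $t\in[0,1]$, and reversible if $\sigma_{xy}(t)=\sigma_{yx}(1-t)$ for all $x,y,t$. *)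

theory Defs
  imports Complex_Main
begin

text \<open>A bicombing on a metric space (X,d), given as a carrier set X with distance d.
  sigma x y is the geodesic from x to y, parametrised on [0,1]; only its values for
  x, y in X and t in [0,1] are relevant.\<close>

definition bicombing :: "('a \<Rightarrow> 'a \<Rightarrow> real) \<Rightarrow> 'a set \<Rightarrow> ('a \<Rightarrow> 'a \<Rightarrow> real \<Rightarrow> 'a) \<Rightarrow> bool" where
  "bicombing d X \<sigma> \<longleftrightarrow>
     (\<forall>x\<in>X. \<forall>y\<in>X.
        (\<forall>t\<in>{0..1}. \<sigma> x y t \<in> X) \<and>
        \<sigma> x y 0 = x \<and> \<sigma> x y 1 = y \<and>
        (\<forall>s\<in>{0..1}. \<forall>t\<in>{0..1}. d (\<sigma> x y s) (\<sigma> x y t) = \<bar>s - t\<bar> * d x y))"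

definition conical_bicombing :: "('a \<Rightarrow> 'a \<Rightarrow> real) \<Rightarrow> 'a set \<Rightarrow> ('a \<Rightarrow> 'a \<Rightarrow> real \<Rightarrow> 'a) \<Rightarrow> bool" where
  "conical_bicombing d X \<sigma> \<longleftrightarrow> bicombing d X \<sigma> \<and>
     (\<forall>x\<in>X. \<forall>y\<in>X. \<forall>x'\<in>X. \<forall>y'\<in>X. \<forall>t\<in>{0..1}.
        d (\<sigma> x y t) (\<sigma> x' y' t) \<le> (1 - t) * d x x' + t * d y y')"

definition reversible_bicombing :: "('a \<Rightarrow> 'a \<Rightarrow> real) \<Rightarrow> 'a set \<Rightarrow> ('a \<Rightarrow> 'a \<Rightarrow> real \<Rightarrow> 'a) \<Rightarrow> bool" where
  "reversible_bicombing d X \<sigma> \<longleftrightarrow> bicombing d X \<sigma> \<and>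
     (\<forall>x\<in>X. \<forall>y\<in>X. \<forall>t\<in>{0..1}. \<sigma> x y t = \<sigma> y x (1 - t))"

definition sup_dist :: "real \<times> real \<Rightarrow> real \<times> real \<Rightarrow> real" where
  "sup_dist p q = max \<bar>fst p - fst q\<bar> \<bar>snd p - snd q\<bar>"

definition upper_half_plane :: "(real \<times> real) set" where
  "upper_half_plane = {p. snd p \<ge> 0}"

end

theory Submission
  imports Defs
begin

text \<open>By the triangle inequality, a path from \<open>x\<close> to \<open>y\<close> that is \<open>d(x, y)\<close>-Lipschitz on
  \<open>[0, 1]\<close> is already a geodesic, and for the supremum metric this leaves much freedom. Besides
  the straight-line bicombing, raise the straight segment from \<open>(a, p)\<close> to \<open>(b, q)\<close> to at least
  the height \<open>((1 - t)|a| + t|b| - |(1 - t)a + tb|)/2\<close>, half the convexity gap of the absolute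
  value: it vanishes at the endpoints, is invariant under \<open>(a, b, t) \<mapsto> (b, a, 1 - t)\<close>, is
  \<open>|a - b|\<close>-Lipschitz in \<open>t\<close> and depends conically on \<open>(a, b)\<close>. Since \<open>max\<close> is 1-Lipschitz for
  the supremum metric, raising preserves the Lipschitz and conical estimates of the straight
  line. The two bicombings differ at the midpoint of the segment from \<open>(-1, 0)\<close> to \<open>(1, 0)\<close>.\<close>

lemma abs_convex_comb_diff:
  fixes a b s t :: real
  shows "\<bar>((1 - s) * a + s * b) - ((1 - t) * a + t * b)\<bar> = \<bar>s - t\<bar> * \<bar>a - b\<bar>"
proof -
  have "((1 - s) * a + s * b) - ((1 - t) * a + t * b) = (t - s) * (a - b)"
    by (simp add: algebra_simps)
  then show ?thesis by (simp add: abs_mult abs_minus_commute)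
qed

lemma convex_comb_mono:
  fixes t u v u' v' :: real
  assumes "0 \<le> t" "t \<le> 1" "u \<le> u'" "v \<le> v'"
  shows "(1 - t) * u + t * v \<le> (1 - t) * u' + t * v'"
  using assms by (intro add_mono mult_left_mono) auto

lemma abs_convex_comb_conical:
  fixes a b a' b' t :: real
  assumes "0 \<le> t" "t \<le> 1"
  shows "\<bar>((1 - t) * a + t * b) - ((1 - t) * a' + t * b')\<bar> \<le> (1 - t) * \<bar>a - a'\<bar> + t * \<bar>b - b'\<bar>"
proof -
  have "((1 - t) * a + t * b) - ((1 - t) * a' + t * b') = (1 - t) * (a - a') + t * (b - b')"
    by (simp add: algebra_simps)
  also have "\<bar>\<dots>\<bar> \<le> \<bar>(1 - t) * (a - a')\<bar> + \<bar>t * (b - b')\<bar>"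
    by (rule abs_triangle_ineq)
  also have "\<dots> = (1 - t) * \<bar>a - a'\<bar> + t * \<bar>b - b'\<bar>"
    using assms by (simp add: abs_mult)
  finally show ?thesis .
qed

lemma abs_max_diff_le: "\<bar>max a b - max a' b'\<bar> \<le> max \<bar>a - a'\<bar> \<bar>b - (b' :: real)\<bar>"
  by (simp add: max_def abs_if)

lemma abs_half_diff_le:
  fixes f f' g g' c :: real
  assumes "\<bar>f - f'\<bar> \<le> c" "\<bar>g - g'\<bar> \<le> c"
  shows "\<bar>(f - g) / 2 - (f' - g') / 2\<bar> \<le> c"
  using assms by (simp add: abs_le_iff field_simps)

lemma lipschitz_path_geodesic:
  fixes d :: "'a \<Rightarrow> 'a \<Rightarrow> real" and \<gamma> :: "real \<Rightarrow> 'a"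
  assumes triangle: "\<And>u v w. d u v \<le> d u w + d w v"
    and commute: "\<And>u v. d u v = d v u"
    and start: "\<gamma> 0 = x" and finish: "\<gamma> 1 = y"
    and lipschitz: "\<And>s t. s \<in> {0..1} \<Longrightarrow> t \<in> {0..1} \<Longrightarrow> d (\<gamma> s) (\<gamma> t) \<le> \<bar>s - t\<bar> * d x y"
    and "s \<in> {0..1}" "t \<in> {0..1}"
  shows "d (\<gamma> s) (\<gamma> t) = \<bar>s - t\<bar> * d x y"
proof -
  have lower: "(t' - s') * d x y \<le> d (\<gamma> s') (\<gamma> t')" if "0 \<le> s'" "s' \<le> t'" "t' \<le> 1" for s' t'
  proof -
    have "d x y \<le> d x (\<gamma> s') + d (\<gamma> s') (\<gamma> t') + d (\<gamma> t') y"
      using triangle[of x y "\<gamma> s'"] triangle[of "\<gamma> s'" y "\<gamma> t'"] by linarith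
    moreover have "d x (\<gamma> s') \<le> s' * d x y"
      using lipschitz[of 0 s'] that start by simp
    moreover have "d (\<gamma> t') y \<le> (1 - t') * d x y"
      using lipschitz[of t' 1] that finish by simp
    ultimately show ?thesis by (simp add: algebra_simps)
  qed
  show ?thesis
  proof (cases "s \<le> t")
    case True
    then show ?thesis using lower[of s t] lipschitz[of s t] assms(6,7) by simp
  next
    case False
    then show ?thesis using lower[of t s] lipschitz[of s t] assms(6,7) commute by simp
  qed
qed

lemma bicombingI_lipschitz:
  fixes d :: "'a \<Rightarrow> 'a \<Rightarrow> real"
  assumes "\<And>u v w. d u v \<le> d u w + d w v" "\<And>u v. d u v = d v u"
    and "\<And>x y t. x \<in> X \<Longrightarrow> y \<in> X \<Longrightarrow> t \<in> {0..1} \<Longrightarrow> \<sigma> x y t \<in> X"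
    and "\<And>x y. x \<in> X \<Longrightarrow> y \<in> X \<Longrightarrow> \<sigma> x y 0 = x"
    and "\<And>x y. x \<in> X \<Longrightarrow> y \<in> X \<Longrightarrow> \<sigma> x y 1 = y"
    and "\<And>x y s t. x \<in> X \<Longrightarrow> y \<in> X \<Longrightarrow> s \<in> {0..1} \<Longrightarrow> t \<in> {0..1} \<Longrightarrow>
           d (\<sigma> x y s) (\<sigma> x y t) \<le> \<bar>s - t\<bar> * d x y"
  shows "bicombing d X \<sigma>"
  unfolding bicombing_def using assms lipschitz_path_geodesic[of d "\<sigma> x y" x y for x y] by simp

lemma sup_dist_le_iff: "sup_dist p q \<le> c \<longleftrightarrow> \<bar>fst p - fst q\<bar> \<le> c \<and> \<bar>snd p - snd q\<bar> \<le> c"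
  by (simp add: sup_dist_def)

lemma sup_dist_commute: "sup_dist p q = sup_dist q p"
  by (simp add: sup_dist_def abs_minus_commute)

lemma sup_dist_triangle: "sup_dist p r \<le> sup_dist p q + sup_dist q r"
  unfolding sup_dist_le_iff by (simp add: sup_dist_def) linarith

lemma abs_fst_le_sup_dist: "\<bar>fst p - fst q\<bar> \<le> sup_dist p q"
  and abs_snd_le_sup_dist: "\<bar>snd p - snd q\<bar> \<le> sup_dist p q"
  by (simp_all add: sup_dist_def)

lemma bicombingI_sup_dist:
  assumes "\<And>x y t. x \<in> X \<Longrightarrow> y \<in> X \<Longrightarrow> t \<in> {0..1} \<Longrightarrow> \<sigma> x y t \<in> X"
    and "\<And>x y. x \<in> X \<Longrightarrow> y \<in> X \<Longrightarrow> \<sigma> x y 0 = x"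
    and "\<And>x y. x \<in> X \<Longrightarrow> y \<in> X \<Longrightarrow> \<sigma> x y 1 = y"
    and "\<And>x y s t. x \<in> X \<Longrightarrow> y \<in> X \<Longrightarrow> s \<in> {0..1} \<Longrightarrow> t \<in> {0..1} \<Longrightarrow>
           sup_dist (\<sigma> x y s) (\<sigma> x y t) \<le> \<bar>s - t\<bar> * sup_dist x y"
  shows "bicombing sup_dist X \<sigma>"
  using sup_dist_triangle sup_dist_commute assms by (rule bicombingI_lipschitz)

definition raise_to :: "real \<Rightarrow> real \<times> real \<Rightarrow> real \<times> real" where
  "raise_to h p = (fst p, max (snd p) h)"

lemma sup_dist_raise_to_le:
  assumes "sup_dist p q \<le> c" "\<bar>h - h'\<bar> \<le> c"
  shows "sup_dist (raise_to h p) (raise_to h' q) \<le> c"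
  using assms abs_max_diff_le[of "snd p" h "snd q" h'] unfolding sup_dist_le_iff raise_to_def
  by (auto intro: order_trans)

definition linear_bicombing :: "real \<times> real \<Rightarrow> real \<times> real \<Rightarrow> real \<Rightarrow> real \<times> real" where
  "linear_bicombing x y t = ((1 - t) * fst x + t * fst y, (1 - t) * snd x + t * snd y)"

lemma sup_dist_linear_bicombing:
  "sup_dist (linear_bicombing x y s) (linear_bicombing x y t) = \<bar>s - t\<bar> * sup_dist x y"
  by (simp add: sup_dist_def linear_bicombing_def abs_convex_comb_diff max_mult_distrib_left)

lemma linear_bicombing_conical_ineq:
  assumes "t \<in> {0..1}"
  shows "sup_dist (linear_bicombing x y t) (linear_bicombing x' y' t)
           \<le> (1 - t) * sup_dist x x' + t * sup_dist y y'"
proof -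
  have "0 \<le> t" "t \<le> 1" using assms by auto
  then show ?thesis
    unfolding sup_dist_le_iff linear_bicombing_def fst_conv snd_conv
    using abs_convex_comb_conical convex_comb_mono abs_fst_le_sup_dist abs_snd_le_sup_dist
    by (meson order_trans)
qed

lemma linear_bicombing_in_upper_half_plane:
  assumes "x \<in> upper_half_plane" "y \<in> upper_half_plane" "t \<in> {0..1}"
  shows "linear_bicombing x y t \<in> upper_half_plane"
  using assms by (simp add: upper_half_plane_def linear_bicombing_def)

lemma bicombing_linear_bicombing: "bicombing sup_dist upper_half_plane linear_bicombing"
proof (rule bicombingI_sup_dist)
  fix x y and t :: real
  assume "x \<in> upper_half_plane" "y \<in> upper_half_plane" "t \<in> {0..1}"
  then show "linear_bicombing x y t \<in> upper_half_plane"
    by (rule linear_bicombing_in_upper_half_plane)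
next
  fix x y
  show "linear_bicombing x y 0 = x" "linear_bicombing x y 1 = y"
    by (simp_all add: linear_bicombing_def)
qed (simp add: sup_dist_linear_bicombing)

lemma linear_bicombing_reverse: "linear_bicombing x y t = linear_bicombing y x (1 - t)"
  by (simp add: linear_bicombing_def algebra_simps)

lemma conical_linear_bicombing: "conical_bicombing sup_dist upper_half_plane linear_bicombing"
  unfolding conical_bicombing_def
  by (simp add: bicombing_linear_bicombing linear_bicombing_conical_ineq)

lemma reversible_linear_bicombing: "reversible_bicombing sup_dist upper_half_plane linear_bicombing"
  unfolding reversible_bicombing_def
  using bicombing_linear_bicombing linear_bicombing_reverse by blast

definition abs_convexity_gap :: "real \<Rightarrow> real \<Rightarrow> real \<Rightarrow> real" where
  "abs_convexity_gap a b t = ((1 - t) * \<bar>a\<bar> + t * \<bar>b\<bar> - \<bar>(1 - t) * a + t * b\<bar>) / 2"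

lemma abs_convexity_gap_0 [simp]: "abs_convexity_gap a b 0 = 0"
  and abs_convexity_gap_1 [simp]: "abs_convexity_gap a b 1 = 0"
  by (simp_all add: abs_convexity_gap_def)

lemma abs_convexity_gap_reverse: "abs_convexity_gap a b t = abs_convexity_gap b a (1 - t)"
  by (simp add: abs_convexity_gap_def algebra_simps)

lemma abs_convexity_gap_lipschitz:
  "\<bar>abs_convexity_gap a b s - abs_convexity_gap a b t\<bar> \<le> \<bar>s - t\<bar> * \<bar>a - b\<bar>"
  unfolding abs_convexity_gap_def
proof (rule abs_half_diff_le)
  have "\<bar>\<bar>a\<bar> - \<bar>b\<bar>\<bar> \<le> \<bar>a - b\<bar>" by (rule abs_triangle_ineq3)
  then show "\<bar>((1 - s) * \<bar>a\<bar> + s * \<bar>b\<bar>) - ((1 - t) * \<bar>a\<bar> + t * \<bar>b\<bar>)\<bar> \<le> \<bar>s - t\<bar> * \<bar>a - b\<bar>"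
    unfolding abs_convex_comb_diff by (simp add: mult_left_mono)
  show "\<bar>\<bar>(1 - s) * a + s * b\<bar> - \<bar>(1 - t) * a + t * b\<bar>\<bar> \<le> \<bar>s - t\<bar> * \<bar>a - b\<bar>"
    using abs_triangle_ineq3 by (metis abs_convex_comb_diff)
qed

lemma abs_convexity_gap_conical:
  assumes "0 \<le> t" "t \<le> 1"
  shows "\<bar>abs_convexity_gap a b t - abs_convexity_gap a' b' t\<bar> \<le> (1 - t) * \<bar>a - a'\<bar> + t * \<bar>b - b'\<bar>"
  unfolding abs_convexity_gap_def
proof (rule abs_half_diff_le)
  have "\<bar>((1 - t) * \<bar>a\<bar> + t * \<bar>b\<bar>) - ((1 - t) * \<bar>a'\<bar> + t * \<bar>b'\<bar>)\<bar>
          \<le> (1 - t) * \<bar>\<bar>a\<bar> - \<bar>a'\<bar>\<bar> + t * \<bar>\<bar>b\<bar> - \<bar>b'\<bar>\<bar>"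
    using assms by (rule abs_convex_comb_conical)
  also have "\<dots> \<le> (1 - t) * \<bar>a - a'\<bar> + t * \<bar>b - b'\<bar>"
    using assms by (intro convex_comb_mono abs_triangle_ineq3)
  finally show "\<bar>((1 - t) * \<bar>a\<bar> + t * \<bar>b\<bar>) - ((1 - t) * \<bar>a'\<bar> + t * \<bar>b'\<bar>)\<bar>
                  \<le> (1 - t) * \<bar>a - a'\<bar> + t * \<bar>b - b'\<bar>" .
  show "\<bar>\<bar>(1 - t) * a + t * b\<bar> - \<bar>(1 - t) * a' + t * b'\<bar>\<bar> \<le> (1 - t) * \<bar>a - a'\<bar> + t * \<bar>b - b'\<bar>"
    using abs_triangle_ineq3 abs_convex_comb_conical[OF assms] by (rule order_trans)
qed

definition raised_bicombing :: "real \<times> real \<Rightarrow> real \<times> real \<Rightarrow> real \<Rightarrow> real \<times> real" where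
  "raised_bicombing x y t = raise_to (abs_convexity_gap (fst x) (fst y) t) (linear_bicombing x y t)"

lemma sup_dist_raised_bicombing_le:
  "sup_dist (raised_bicombing x y s) (raised_bicombing x y t) \<le> \<bar>s - t\<bar> * sup_dist x y"
  unfolding raised_bicombing_def
proof (rule sup_dist_raise_to_le)
  show "sup_dist (linear_bicombing x y s) (linear_bicombing x y t) \<le> \<bar>s - t\<bar> * sup_dist x y"
    by (simp add: sup_dist_linear_bicombing)
  have "\<bar>fst x - fst y\<bar> \<le> sup_dist x y" by (rule abs_fst_le_sup_dist)
  then show "\<bar>abs_convexity_gap (fst x) (fst y) s - abs_convexity_gap (fst x) (fst y) t\<bar>
               \<le> \<bar>s - t\<bar> * sup_dist x y"
    using abs_convexity_gap_lipschitz by (meson abs_ge_zero mult_left_mono order_trans)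
qed

lemma raised_bicombing_conical_ineq:
  assumes "t \<in> {0..1}"
  shows "sup_dist (raised_bicombing x y t) (raised_bicombing x' y' t)
           \<le> (1 - t) * sup_dist x x' + t * sup_dist y y'"
  unfolding raised_bicombing_def
proof (rule sup_dist_raise_to_le)
  show "sup_dist (linear_bicombing x y t) (linear_bicombing x' y' t)
          \<le> (1 - t) * sup_dist x x' + t * sup_dist y y'"
    using assms by (rule linear_bicombing_conical_ineq)
  have "0 \<le> t" "t \<le> 1" using assms by auto
  then show "\<bar>abs_convexity_gap (fst x) (fst y) t - abs_convexity_gap (fst x') (fst y') t\<bar>
               \<le> (1 - t) * sup_dist x x' + t * sup_dist y y'"
    using abs_convexity_gap_conical convex_comb_mono abs_fst_le_sup_dist by (meson order_trans)
qed

lemma bicombing_raised_bicombing: "bicombing sup_dist upper_half_plane raised_bicombing"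
proof (rule bicombingI_sup_dist)
  fix x y and t :: real
  assume "x \<in> upper_half_plane" "y \<in> upper_half_plane" "t \<in> {0..1}"
  then show "raised_bicombing x y t \<in> upper_half_plane"
    using linear_bicombing_in_upper_half_plane
    by (simp add: raised_bicombing_def raise_to_def upper_half_plane_def max.coboundedI1)
next
  fix x y assume "x \<in> upper_half_plane" "y \<in> upper_half_plane"
  then show "raised_bicombing x y 0 = x" "raised_bicombing x y 1 = y"
    by (simp_all add: raised_bicombing_def raise_to_def linear_bicombing_def upper_half_plane_def)
qed (rule sup_dist_raised_bicombing_le)

lemma raised_bicombing_reverse: "raised_bicombing x y t = raised_bicombing y x (1 - t)"
  unfolding raised_bicombing_def
  by (metis linear_bicombing_reverse abs_convexity_gap_reverse)

lemma conical_raised_bicombing: "conical_bicombing sup_dist upper_half_plane raised_bicombing"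
  unfolding conical_bicombing_def
  by (simp add: bicombing_raised_bicombing raised_bicombing_conical_ineq)

lemma reversible_raised_bicombing: "reversible_bicombing sup_dist upper_half_plane raised_bicombing"
  unfolding reversible_bicombing_def
  using bicombing_raised_bicombing raised_bicombing_reverse by blast

lemma raised_bicombing_ne_linear_bicombing:
  "raised_bicombing (-1, 0) (1, 0) (1/2) \<noteq> linear_bicombing (-1, 0) (1, 0) (1/2)"
  by (simp add: raised_bicombing_def raise_to_def linear_bicombing_def abs_convexity_gap_def)

theorem proposition1p4:
  shows "\<exists>\<sigma>1 \<sigma>2.
     conical_bicombing sup_dist upper_half_plane \<sigma>1 \<and>
     reversible_bicombing sup_dist upper_half_plane \<sigma>1 \<and>
     conical_bicombing sup_dist upper_half_plane \<sigma>2 \<and>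
     reversible_bicombing sup_dist upper_half_plane \<sigma>2 \<and>
     (\<exists>x\<in>upper_half_plane. \<exists>y\<in>upper_half_plane. \<exists>t\<in>{0..1}. \<sigma>1 x y t \<noteq> \<sigma>2 x y t)"
proof (intro exI conjI)
  show "conical_bicombing sup_dist upper_half_plane linear_bicombing"
    by (rule conical_linear_bicombing)
  show "reversible_bicombing sup_dist upper_half_plane linear_bicombing"
    by (rule reversible_linear_bicombing)
  show "conical_bicombing sup_dist upper_half_plane raised_bicombing"
    by (rule conical_raised_bicombing)
  show "reversible_bicombing sup_dist upper_half_plane raised_bicombing"
    by (rule reversible_raised_bicombing)
  have "(-1, 0) \<in> upper_half_plane" "(1, 0) \<in> upper_half_plane" "(1/2 :: real) \<in> {0..1}"
    by (simp_all add: upper_half_plane_def)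
  then show "\<exists>x\<in>upper_half_plane. \<exists>y\<in>upper_half_plane. \<exists>t\<in>{0..1}.
               linear_bicombing x y t \<noteq> raised_bicombing x y t"
    using raised_bicombing_ne_linear_bicombing by metis
qed

end
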